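(* Let $\mu>0$ and suppose Assumptions A and B below hold. Let $\eta_x>0$, $\eta_y\in(0,1/\mu)$, $\epsilon>0$, and let $M_x=\lceil128\sigma_x^2/\epsilon^2+1\rceil$ and $M_y=\lceil(1+\frac{6}{\mu\eta_y}\frac{2-\mu\eta_y}{1-\mu\eta_y})\frac{128}{\epsilon^2}\sigma_y^2+1\rceil$. Then for any $(\mathbf{x},y)\in\mathrm{dom}\,g\times\mathrm{dom}\,h$ and any scalar $r>0$, $$\mathbf{P}\Big(\|\tilde G(\mathbf{x},y;\boldsymbol\xi)-G(\mathbf{x},y)\|>r\frac\epsilon8\Big)\le\frac1{r^2}.$$
   Context: Setting. $\mathcal{X}_i=\mathbb{R}^{n_i}$, $i\in\mathcal{N}=\{1,\dots,N\}$, $\mathcal{X}=\prod_i\mathcal{X}_i$, $\mathcal{Y}$ finite-dimensional Euclidean; $g(\mathbf{x})=\sum_ig_i(x_i)$; $\mathrm{prox}_\phi(u)=\arg\min_v\phi(v)+\frac12\|v-u\|^2$. Assumption A: $g_i$, $h$ closed convex; $f$ differentiable on an open set containing $\mathrm{dom}\,g\times\mathrm{dom}\,h$, $\nabla f$ $L$-Lipschitz there, $f(\mathbf{x},\cdot)$ $\mu$-strongly concave for each $\mathbf{x}\in\mathrm{dom}\,g$. Assumption B: stochastic oracles $\tilde\nabla_{x_i}f(\mathbf{x},y;\omega)$, $\tilde\nabla_yf(\mathbf{x},y;\zeta)$ with $\mathbf{E}_\omega[\tilde\nabla_{x_i}f]=\nabla_{x_i}f$, $\mathbf{E}_\zeta[\tilde\nabla_yf]=\nabla_yf$,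 $\mathbf{E}\|\tilde\nabla_{x_i}f-\nabla_{x_i}f\|^2\le\sigma_x^2/N$, $\mathbf{E}\|\tilde\nabla_yf-\nabla_yf\|^2\le\sigma_y^2$ at every point of $\mathrm{dom}\,g\times\mathrm{dom}\,h$. For i.i.d. $\boldsymbol\omega=[\omega_j]_{j=1}^{M_x}$, $\boldsymbol\zeta=[\zeta_j]_{j=1}^{M_y}$, $\boldsymbol\xi=(\boldsymbol\omega,\boldsymbol\zeta)$: $s_{x_i}=\frac1{M_x}\sum_j\tilde\nabla_{x_i}f(\mathbf{x},y;\omega_j)$, $s_y=\frac1{M_y}\sum_j\tilde\nabla_yf(\mathbf{x},y;\zeta_j)$, $\tilde G_{x_i}=[x_i-\mathrm{prox}_{\eta_xg_i}(x_i-\eta_xs_{x_i})]/\eta_x$, $\tilde G_y=[\mathrm{prox}_{\eta_yh}(y+\eta_ys_y)-y]/\eta_y$, $\tilde G=([\tilde G_{x_i}]_i,\tilde G_y)$; the deterministic map $G=([G_{x_i}]_i,G_y)$ is defined the same way with $s_{x_i},s_y$ replaced by $\nabla_{x_i}f(\mathbf{x},y),\nabla_yf(\mathbf{x},y)$. *)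

theory Defs
  imports "HOL-Analysis.Analysis" "HOL-Probability.Probability"
begin

text \<open>Block structure: the coordinates of real^'n are partitioned by blk into N classes;
  block i (a copy of R^(n_i), n_i = number of coordinates j with blk j = i) is the
  coordinate subspace blk_sub blk i, and x_i is blk_proj blk i x.\<close>

definition blk_sub :: "('n \<Rightarrow> nat) \<Rightarrow> nat \<Rightarrow> (real^'n) set" where
  "blk_sub blk i = {v. \<forall>j. blk j \<noteq> i \<longrightarrow> v $ j = 0}"

definition blk_proj :: "('n \<Rightarrow> nat) \<Rightarrow> nat \<Rightarrow> real^'n \<Rightarrow> real^'n" where
  "blk_proj blk i x = (\<chi> j. if blk j = i then x $ j else 0)"

definition epi_on :: "'a set \<Rightarrow> ('a \<Rightarrow> ereal) \<Rightarrow> ('a \<times> real) set" where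
  "epi_on S \<phi> = {(v, t). v \<in> S \<and> \<phi> v \<le> ereal t}"

text \<open>Proper closed convex function on S (S is the ambient space: UNIV or a block subspace).\<close>
definition closed_convex_on :: "'a::real_normed_vector set \<Rightarrow> ('a \<Rightarrow> ereal) \<Rightarrow> bool" where
  "closed_convex_on S \<phi> \<longleftrightarrow>
     (\<forall>v\<in>S. \<phi> v \<noteq> -\<infinity>) \<and> (\<exists>v\<in>S. \<phi> v \<noteq> \<infinity>) \<and>
     convex (epi_on S \<phi>) \<and> closed (epi_on S \<phi>)"

definition prox_on :: "'a::real_normed_vector set \<Rightarrow> ('a \<Rightarrow> ereal) \<Rightarrow> 'a \<Rightarrow> 'a" where
  "prox_on S \<phi> u = (THE v. v \<in> S \<and>
      (\<forall>w\<in>S. \<phi> v + ereal ((norm (v - u))\<^sup>2 / 2) \<le> \<phi> w + ereal ((norm (w - u))\<^sup>2 / 2)))"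

definition grad :: "('a::euclidean_space \<Rightarrow> real) \<Rightarrow> 'a \<Rightarrow> 'a" where
  "grad F z = (THE d. (F has_derivative (\<lambda>h. d \<bullet> h)) (at z))"

definition strongly_concave_on :: "'a::real_normed_vector set \<Rightarrow> real \<Rightarrow> ('a \<Rightarrow> real) \<Rightarrow> bool" where
  "strongly_concave_on S m \<phi> \<longleftrightarrow>
     (\<forall>a\<in>S. \<forall>b\<in>S. \<forall>t\<in>{0..1}.
        t * \<phi> a + (1 - t) * \<phi> b + m / 2 * t * (1 - t) * (norm (a - b))\<^sup>2
          \<le> \<phi> (t *\<^sub>R a + (1 - t) *\<^sub>R b))"

text \<open>The (generalized) gradient map G(x,y) built from estimates sx (of grad_x f, blockwise)
  and sy (of grad_y f); G = ([G_{x_i}]_i, G_y) with the blocks G_{x_i} assembled as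
  disjointly supported components of a vector in real^'n.\<close>
definition grad_map ::
  "nat \<Rightarrow> ('n \<Rightarrow> nat) \<Rightarrow> (nat \<Rightarrow> real^'n \<Rightarrow> ereal) \<Rightarrow> ('y::euclidean_space \<Rightarrow> ereal)
   \<Rightarrow> real \<Rightarrow> real \<Rightarrow> real^'n \<Rightarrow> 'y \<Rightarrow> real^'n \<Rightarrow> 'y \<Rightarrow> (real^'n) \<times> 'y" where
  "grad_map N blk g h \<eta>x \<eta>y x y sx sy =
     ((\<Sum>i<N. (1 / \<eta>x) *\<^sub>R (blk_proj blk i x -
         prox_on (blk_sub blk i) (\<lambda>v. ereal \<eta>x * g i v) (blk_proj blk i x - \<eta>x *\<^sub>R blk_proj blk i sx))),
      (1 / \<eta>y) *\<^sub>R (prox_on UNIV (\<lambda>v. ereal \<eta>y * h v) (y + \<eta>y *\<^sub>R sy) - y))"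

end

theory Submission
  imports Defs
begin

text \<open>
  Each block of the gradient mapping has the form (1/eta) (z - prox (z - eta s)), and proximal
  maps of closed proper convex functions are nonexpansive; so the gradient mapping is
  1-Lipschitz in the gradient estimate s it is fed, and
  ||G~ - G||^2 <= ||s_x - grad_x f||^2 + ||s_y - grad_y f||^2.
  A sample mean of M independent unbiased oracle calls has mean-square error at most sigma^2/M,
  because the cross terms vanish by independence; the block oracles share their samples but
  have errors in orthogonal blocks, so their variances sigma_x^2/N add up to sigma_x^2.
  The choice of M_x and M_y makes both errors at most eps^2/128, and Chebyshev's inequality
  bounds the probability of ||G~ - G|| > r eps/8 by (eps^2/64) / (r eps/8)^2 = 1/r^2.
  Because prox_on is a definite description, the argument also needs the proximal point to
  exist (a minimiser over a compact sublevel set of the epigraph) and to be unique (by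
  nonexpansiveness).
\<close>

section \<open>Proximal maps\<close>

definition is_prox :: "'a::real_normed_vector set \<Rightarrow> ('a \<Rightarrow> ereal) \<Rightarrow> 'a \<Rightarrow> 'a \<Rightarrow> bool" where
  "is_prox S \<phi> u p \<longleftrightarrow> p \<in> S \<and>
      (\<forall>w\<in>S. \<phi> p + ereal ((norm (p - u))\<^sup>2 / 2) \<le> \<phi> w + ereal ((norm (w - u))\<^sup>2 / 2))"

lemma closed_convex_on_obtain_finite:
  assumes "closed_convex_on S \<phi>"
  obtains v c where "v \<in> S" "\<phi> v = ereal c"
proof -
  from assms obtain v where "v \<in> S" "\<phi> v \<noteq> \<infinity>" "\<phi> v \<noteq> -\<infinity>"
    unfolding closed_convex_on_def by blast
  then show ?thesis using that by (cases "\<phi> v") auto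
qed

lemma closed_convex_on_convex_combination:
  assumes cc: "closed_convex_on S \<phi>" and "p \<in> S" "q \<in> S" "\<phi> p = ereal P" "\<phi> q = ereal Q"
    and "0 \<le> t" "t \<le> 1"
  shows "(1 - t) *\<^sub>R p + t *\<^sub>R q \<in> S" and "\<phi> ((1 - t) *\<^sub>R p + t *\<^sub>R q) \<le> ereal ((1 - t) * P + t * Q)"
proof -
  have "convex (epi_on S \<phi>)" using cc unfolding closed_convex_on_def by blast
  moreover have "(p, P) \<in> epi_on S \<phi>" "(q, Q) \<in> epi_on S \<phi>" using assms unfolding epi_on_def by auto
  ultimately have "((1 - t) *\<^sub>R p + t *\<^sub>R q, (1 - t) * P + t * Q) \<in> epi_on S \<phi>"
    using convexD[of "epi_on S \<phi>" "(p, P)" "(q, Q)" "1 - t" t] assms by simp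
  then show "(1 - t) *\<^sub>R p + t *\<^sub>R q \<in> S" "\<phi> ((1 - t) *\<^sub>R p + t *\<^sub>R q) \<le> ereal ((1 - t) * P + t * Q)"
    unfolding epi_on_def by auto
qed

lemma is_prox_finite:
  assumes cc: "closed_convex_on S \<phi>" and p: "is_prox S \<phi> u p"
  obtains P where "\<phi> p = ereal P"
proof -
  obtain v c where v: "v \<in> S" "\<phi> v = ereal c" using closed_convex_on_obtain_finite[OF cc] .
  have "\<phi> p + ereal ((norm (p - u))\<^sup>2 / 2) \<le> ereal c + ereal ((norm (v - u))\<^sup>2 / 2)"
    using p v unfolding is_prox_def by metis
  then have "\<phi> p \<noteq> \<infinity>" by auto
  moreover have "\<phi> p \<noteq> -\<infinity>" using cc p unfolding closed_convex_on_def is_prox_def by blast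
  ultimately show ?thesis using that by (cases "\<phi> p") auto
qed

lemma is_prox_variational_ineq:
  fixes u :: "'a::real_inner"
  assumes cc: "closed_convex_on S \<phi>" and p: "is_prox S \<phi> u p" and q: "q \<in> S"
    and P: "\<phi> p = ereal P" and Q: "\<phi> q = ereal Q"
  shows "P - Q \<le> (p - u) \<bullet> (q - p)"
proof -
  have pS: "p \<in> S" using p unfolding is_prox_def by blast
  have segment: "P - Q \<le> (p - u) \<bullet> (q - p) + t / 2 * (norm (q - p))\<^sup>2" if t: "0 < t" "t \<le> 1" for t
  proof -
    define z where "z = (1 - t) *\<^sub>R p + t *\<^sub>R q"
    note comb = closed_convex_on_convex_combination[OF cc pS q P Q, of t, folded z_def]
    have "\<phi> p + ereal ((norm (p - u))\<^sup>2 / 2) \<le> \<phi> z + ereal ((norm (z - u))\<^sup>2 / 2)"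
      using p comb t unfolding is_prox_def by auto
    also have "\<dots> \<le> ereal ((1 - t) * P + t * Q) + ereal ((norm (z - u))\<^sup>2 / 2)"
      using comb t by (intro add_right_mono) auto
    finally have "P + (norm (p - u))\<^sup>2 / 2 \<le> (1 - t) * P + t * Q + (norm (z - u))\<^sup>2 / 2"
      using P by simp
    moreover have "(norm (z - u))\<^sup>2 = (norm (p - u))\<^sup>2 + 2 * t * ((p - u) \<bullet> (q - p)) + t\<^sup>2 * (norm (q - p))\<^sup>2"
    proof -
      have zu: "z - u = (p - u) + t *\<^sub>R (q - p)"
        unfolding z_def by (simp add: algebra_simps)
      show ?thesis unfolding zu power2_norm_eq_inner
        by (simp add: inner_add_left inner_add_right inner_commute power2_eq_square algebra_simps)
    qed
    ultimately have "t * (P - Q) \<le> t * ((p - u) \<bullet> (q - p) + t / 2 * (norm (q - p))\<^sup>2)"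
      by (simp add: algebra_simps power2_eq_square)
    then show ?thesis using t by simp
  qed
  have "((\<lambda>t. (p - u) \<bullet> (q - p) + t / 2 * (norm (q - p))\<^sup>2) \<longlongrightarrow> (p - u) \<bullet> (q - p)) (at_right 0)"
    by (auto intro!: tendsto_eq_intros)
  moreover have "eventually (\<lambda>t. P - Q \<le> (p - u) \<bullet> (q - p) + t / 2 * (norm (q - p))\<^sup>2) (at_right 0)"
    unfolding eventually_at_right_field using segment by (intro exI[of _ 1]) auto
  ultimately show ?thesis by (rule tendsto_lowerbound) simp
qed

lemma is_prox_firmly_nonexpansive:
  fixes u u' :: "'a::real_inner"
  assumes cc: "closed_convex_on S \<phi>" and p: "is_prox S \<phi> u p" and q: "is_prox S \<phi> u' q"
  shows "(norm (p - q))\<^sup>2 \<le> (u - u') \<bullet> (p - q)"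
proof -
  obtain P where P: "\<phi> p = ereal P" using is_prox_finite[OF cc p] .
  obtain Q where Q: "\<phi> q = ereal Q" using is_prox_finite[OF cc q] .
  have "p \<in> S" "q \<in> S" using p q unfolding is_prox_def by auto
  have "P - Q \<le> (p - u) \<bullet> (q - p)" "Q - P \<le> (q - u') \<bullet> (p - q)"
    using is_prox_variational_ineq[OF cc p \<open>q \<in> S\<close> P Q]
      is_prox_variational_ineq[OF cc q \<open>p \<in> S\<close> Q P] by auto
  moreover have "(p - u) \<bullet> (q - p) + (q - u') \<bullet> (p - q) = (u - u') \<bullet> (p - q) - (norm (p - q))\<^sup>2"
    by (simp add: power2_norm_eq_inner algebra_simps inner_commute)
  ultimately show ?thesis by linarith
qed

lemma is_prox_nonexpansive:
  fixes u u' :: "'a::real_inner"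
  assumes cc: "closed_convex_on S \<phi>" and p: "is_prox S \<phi> u p" and q: "is_prox S \<phi> u' q"
  shows "norm (p - q) \<le> norm (u - u')"
proof -
  have "norm (p - q) * norm (p - q) \<le> norm (u - u') * norm (p - q)"
    using is_prox_firmly_nonexpansive[OF cc p q] norm_cauchy_schwarz[of "u - u'" "p - q"]
    by (simp add: power2_eq_square)
  then show ?thesis by (cases "norm (p - q) = 0") auto
qed

lemma closed_convex_on_affine_minorant:
  fixes \<phi> :: "'a::euclidean_space \<Rightarrow> ereal"
  assumes cc: "closed_convex_on S \<phi>"
  obtains \<alpha> \<kappa> where "0 \<le> \<kappa>" "\<And>v t. (v, t) \<in> epi_on S \<phi> \<Longrightarrow> \<alpha> - \<kappa> * norm v \<le> t"
proof -
  obtain v0 c0 where v0: "v0 \<in> S" "\<phi> v0 = ereal c0" using closed_convex_on_obtain_finite[OF cc] .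
  have "convex (epi_on S \<phi>)" "closed (epi_on S \<phi>)" "(v0, c0 - 1) \<notin> epi_on S \<phi>"
    using cc v0 unfolding closed_convex_on_def epi_on_def by auto
  from separating_hyperplane_closed_point[OF this]
  obtain a b where ab: "a \<bullet> (v0, c0 - 1) < b" "\<forall>z\<in>epi_on S \<phi>. b < a \<bullet> z" by blast
  obtain c \<beta> where a: "a = (c, \<beta>)" by (cases a)
  have "(v0, c0) \<in> epi_on S \<phi>" using v0 unfolding epi_on_def by auto
  with ab a have "c \<bullet> v0 + \<beta> * (c0 - 1) < b" "b < c \<bullet> v0 + \<beta> * c0" by auto
  then have \<beta>: "0 < \<beta>" by (simp add: algebra_simps)
  show ?thesis
  proof (rule that[of "norm c / \<beta>" "b / \<beta>"])
    show "0 \<le> norm c / \<beta>" using \<beta> by simp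
    fix v t assume "(v, t) \<in> epi_on S \<phi>"
    with ab a have "b < c \<bullet> v + \<beta> * t" by auto
    moreover have "c \<bullet> v \<le> norm c * norm v" by (rule norm_cauchy_schwarz)
    ultimately show "b / \<beta> - norm c / \<beta> * norm v \<le> t" using \<beta> by (simp add: field_simps)
  qed
qed

lemma compact_prox_sublevel:
  fixes \<phi> :: "'a::euclidean_space \<Rightarrow> ereal"
  assumes cc: "closed_convex_on S \<phi>"
  shows "compact {z \<in> epi_on S \<phi>. snd z + (norm (fst z - u))\<^sup>2 / 2 \<le> F}"
    (is "compact ?K")
proof -
  obtain \<alpha> \<kappa> where \<kappa>: "0 \<le> \<kappa>" and minor: "\<And>v t. (v, t) \<in> epi_on S \<phi> \<Longrightarrow> \<alpha> - \<kappa> * norm v \<le> t"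
    using closed_convex_on_affine_minorant[OF cc] by metis
  define R where "R = norm u + sqrt (4 * (F - \<alpha> + \<kappa> * norm u + \<kappa>\<^sup>2))"
  have "?K = epi_on S \<phi> \<inter> {z. snd z + (norm (fst z - u))\<^sup>2 / 2 \<le> F}" by blast
  moreover have "closed (epi_on S \<phi>)" using cc unfolding closed_convex_on_def by blast
  moreover have "closed {z. snd z + (norm (fst z - u))\<^sup>2 / 2 \<le> F}"
    by (intro closed_Collect_le continuous_intros) simp
  ultimately have "closed ?K" by (simp add: closed_Int)
  moreover have "?K \<subseteq> cball 0 R \<times> {\<alpha> - \<kappa> * R .. F}"
  proof
    fix z assume z: "z \<in> ?K"
    obtain v t where vt: "z = (v, t)" by (cases z)
    have epi: "(v, t) \<in> epi_on S \<phi>" and le: "t + (norm (v - u))\<^sup>2 / 2 \<le> F"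
      using z vt by auto
    define d where "d = norm (v - u)"
    have v_le: "norm v \<le> d + norm u"
      unfolding d_def using norm_triangle_ineq4[of v u] norm_triangle_sub[of v u] by simp
    have "\<alpha> - \<kappa> * (d + norm u) + d\<^sup>2 / 2 \<le> F"
      using minor[OF epi] le mult_left_mono[OF v_le \<kappa>] unfolding d_def by linarith
    moreover have "\<kappa> * d \<le> d\<^sup>2 / 4 + \<kappa>\<^sup>2"
      using zero_le_power2[of "d / 2 - \<kappa>"] by (simp add: power2_eq_square algebra_simps)
    ultimately have "d\<^sup>2 \<le> 4 * (F - \<alpha> + \<kappa> * norm u + \<kappa>\<^sup>2)"
      by (simp add: algebra_simps)
    then have "norm v \<le> R" unfolding R_def using v_le real_le_rsqrt by fastforce
    moreover have "\<alpha> - \<kappa> * R \<le> t"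
      using minor[OF epi] mult_left_mono[OF \<open>norm v \<le> R\<close> \<kappa>] by linarith
    moreover have "t \<le> F" using le zero_le_power2[of "norm (v - u)"] by linarith
    ultimately show "z \<in> cball 0 R \<times> {\<alpha> - \<kappa> * R .. F}" using vt by simp
  qed
  then have "bounded ?K"
    by (rule bounded_subset[rotated]) (intro bounded_Times bounded_cball bounded_closed_interval)
  ultimately show ?thesis by (simp add: compact_eq_bounded_closed)
qed

lemma is_prox_exists:
  fixes \<phi> :: "'a::euclidean_space \<Rightarrow> ereal"
  assumes cc: "closed_convex_on S \<phi>"
  shows "\<exists>p. is_prox S \<phi> u p"
proof -
  obtain v0 c0 where v0: "v0 \<in> S" "\<phi> v0 = ereal c0" using closed_convex_on_obtain_finite[OF cc] .
  define \<Phi> where "\<Phi> z = snd z + (norm (fst z - u))\<^sup>2 / 2" for z :: "'a \<times> real"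
  define K where "K = {z \<in> epi_on S \<phi>. \<Phi> z \<le> \<Phi> (v0, c0)}"
  have "compact K" unfolding K_def \<Phi>_def by (rule compact_prox_sublevel[OF cc])
  moreover have "(v0, c0) \<in> K" using v0 unfolding K_def epi_on_def by auto
  moreover have "continuous_on K \<Phi>" unfolding \<Phi>_def by (intro continuous_intros) auto
  ultimately obtain z where zK: "z \<in> K" and zmin: "\<And>z'. z' \<in> K \<Longrightarrow> \<Phi> z \<le> \<Phi> z'"
    using continuous_attains_inf[of K \<Phi>] by blast
  obtain p tp where z: "z = (p, tp)" by (cases z)
  have pS: "p \<in> S" and p_le: "\<phi> p \<le> ereal tp" using zK z unfolding K_def epi_on_def by auto
  \<comment> \<open>competitors outside K are beaten already by (v0, c0)\<close>
  have z_le: "\<Phi> z \<le> tw + (norm (w - u))\<^sup>2 / 2" if "w \<in> S" "\<phi> w = ereal tw" for w tw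
  proof (cases "(w, tw) \<in> K")
    case True
    then show ?thesis using zmin unfolding \<Phi>_def by fastforce
  next
    case False
    then have "\<Phi> (v0, c0) \<le> \<Phi> (w, tw)" using that unfolding K_def epi_on_def by auto
    moreover have "\<Phi> z \<le> \<Phi> (v0, c0)" using zK unfolding K_def by blast
    ultimately show ?thesis unfolding \<Phi>_def by simp
  qed
  have "\<phi> p + ereal ((norm (p - u))\<^sup>2 / 2) \<le> \<phi> w + ereal ((norm (w - u))\<^sup>2 / 2)" if "w \<in> S" for w
  proof -
    have "\<phi> p + ereal ((norm (p - u))\<^sup>2 / 2) \<le> ereal (\<Phi> z)"
      using add_right_mono[OF p_le, of "ereal ((norm (p - u))\<^sup>2 / 2)"] unfolding \<Phi>_def z by simp
    also have "\<dots> \<le> \<phi> w + ereal ((norm (w - u))\<^sup>2 / 2)"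
      using z_le[OF that] cc that unfolding closed_convex_on_def by (cases "\<phi> w") auto
    finally show ?thesis .
  qed
  with pS have "is_prox S \<phi> u p" unfolding is_prox_def by blast
  then show ?thesis ..
qed

lemma prox_on_is_prox:
  fixes \<phi> :: "'a::euclidean_space \<Rightarrow> ereal"
  assumes cc: "closed_convex_on S \<phi>"
  shows "is_prox S \<phi> u (prox_on S \<phi> u)"
proof -
  obtain p where p: "is_prox S \<phi> u p" using is_prox_exists[OF cc] by blast
  have "q = p" if "is_prox S \<phi> u q" for q
    using is_prox_nonexpansive[OF cc that p] by simp
  with p have "\<exists>!p. is_prox S \<phi> u p" by blast
  then show ?thesis unfolding prox_on_def is_prox_def[symmetric] by (rule theI')
qed

lemma prox_on_mem: "closed_convex_on S \<phi> \<Longrightarrow> prox_on S \<phi> u \<in> S"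
  for \<phi> :: "'a::euclidean_space \<Rightarrow> ereal"
  using prox_on_is_prox unfolding is_prox_def by blast

lemma prox_on_nonexpansive:
  fixes \<phi> :: "'a::euclidean_space \<Rightarrow> ereal"
  assumes "closed_convex_on S \<phi>"
  shows "norm (prox_on S \<phi> u - prox_on S \<phi> u') \<le> norm (u - u')"
  using is_prox_nonexpansive[OF assms prox_on_is_prox[OF assms] prox_on_is_prox[OF assms]] .

lemma closed_convex_on_cmult:
  fixes \<phi> :: "'a::euclidean_space \<Rightarrow> ereal"
  assumes cc: "closed_convex_on S \<phi>" and c: "0 < c"
  shows "closed_convex_on S (\<lambda>v. ereal c * \<phi> v)"
proof -
  define f where "f z = (fst z, snd z / c)" for z :: "'a \<times> real"
  have "linear f" unfolding f_def by (rule linearI) (auto simp: add_divide_distrib)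
  have epi: "epi_on S (\<lambda>v. ereal c * \<phi> v) = f -` epi_on S \<phi>"
  proof -
    have "ereal c * \<phi> v \<le> ereal t \<longleftrightarrow> \<phi> v \<le> ereal (t / c)" for v t
      using c by (cases "\<phi> v") (auto simp: pos_le_divide_eq mult.commute)
    then show ?thesis unfolding f_def epi_on_def by auto
  qed
  have "convex (epi_on S (\<lambda>v. ereal c * \<phi> v))"
    unfolding epi using cc \<open>linear f\<close> convex_linear_vimage unfolding closed_convex_on_def by blast
  moreover have "closed (epi_on S (\<lambda>v. ereal c * \<phi> v))"
    unfolding epi using cc c unfolding closed_convex_on_def f_def
    by (intro continuous_closed_vimage) (auto intro!: continuous_intros)
  moreover have "ereal c * \<phi> v \<noteq> -\<infinity>" if "v \<in> S" for v
    using cc that c unfolding closed_convex_on_def by (cases "\<phi> v") auto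
  moreover obtain v0 c0 where "v0 \<in> S" "\<phi> v0 = ereal c0"
    using closed_convex_on_obtain_finite[OF cc] .
  ultimately show ?thesis unfolding closed_convex_on_def by force
qed

section \<open>Mean-square error of sample means\<close>

lemma (in prob_space) indep_var_of_indep_vars:
  assumes ind: "indep_vars M' X I" and "i \<in> I" "j \<in> I" "i \<noteq> j"
  shows "indep_var (M' i) (X i) (M' j) (X j)"
proof -
  have "indep_var (M' i) ((\<lambda>f. f i) \<circ> (\<lambda>\<omega>. restrict (\<lambda>k. X k \<omega>) {i}))
      (M' j) ((\<lambda>f. f j) \<circ> (\<lambda>\<omega>. restrict (\<lambda>k. X k \<omega>) {j}))"
    using assms
    by (intro indep_var_compose[OF indep_var_restrict[OF ind]] measurable_component_singleton) auto
  then show ?thesis by (simp add: comp_def)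
qed

lemma (in prob_space) integral_inner_indep_eq_zero:
  fixes X Y :: "'a \<Rightarrow> 'b::euclidean_space"
  assumes ind: "indep_var borel X borel Y" and X: "integrable M X" and Y: "integrable M Y"
    and mean: "(\<integral>\<omega>. X \<omega> \<partial>M) = 0"
  shows "integrable M (\<lambda>\<omega>. X \<omega> \<bullet> Y \<omega>)" and "(\<integral>\<omega>. X \<omega> \<bullet> Y \<omega> \<partial>M) = 0"
proof -
  have coord: "indep_var borel (\<lambda>\<omega>. X \<omega> \<bullet> b) borel (\<lambda>\<omega>. Y \<omega> \<bullet> b)" for b
    using indep_var_compose[OF ind, of "\<lambda>v. v \<bullet> b" borel "\<lambda>v. v \<bullet> b" borel]
    unfolding comp_def by measurable
  have coord_int: "integrable M (\<lambda>\<omega>. (X \<omega> \<bullet> b) * (Y \<omega> \<bullet> b))" for b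
    by (rule indep_var_integrable[OF coord]) (use X Y in auto)
  have coord_zero: "(\<integral>\<omega>. (X \<omega> \<bullet> b) * (Y \<omega> \<bullet> b) \<partial>M) = 0" for b
    by (subst indep_var_lebesgue_integral[OF coord]) (use X Y mean in auto)
  have inner: "(\<lambda>\<omega>. X \<omega> \<bullet> Y \<omega>) = (\<lambda>\<omega>. \<Sum>b\<in>Basis. (X \<omega> \<bullet> b) * (Y \<omega> \<bullet> b))"
    by (rule ext) (rule euclidean_inner)
  show "integrable M (\<lambda>\<omega>. X \<omega> \<bullet> Y \<omega>)"
    unfolding inner by (intro Bochner_Integration.integrable_sum coord_int)
  show "(\<integral>\<omega>. X \<omega> \<bullet> Y \<omega> \<partial>M) = 0"
    unfolding inner by (subst Bochner_Integration.integral_sum) (simp_all add: coord_int coord_zero)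
qed

lemma (in prob_space) integral_sq_norm_sum_indep:
  fixes X :: "'i \<Rightarrow> 'a \<Rightarrow> 'b::euclidean_space"
  assumes I: "finite I" and ind: "indep_vars (\<lambda>_. borel) X I"
    and int: "\<And>i. i \<in> I \<Longrightarrow> integrable M (X i)"
    and mean: "\<And>i. i \<in> I \<Longrightarrow> (\<integral>\<omega>. X i \<omega> \<partial>M) = 0"
    and sq_int: "\<And>i. i \<in> I \<Longrightarrow> integrable M (\<lambda>\<omega>. (norm (X i \<omega>))\<^sup>2)"
  shows "integrable M (\<lambda>\<omega>. (norm (\<Sum>i\<in>I. X i \<omega>))\<^sup>2)"
    and "(\<integral>\<omega>. (norm (\<Sum>i\<in>I. X i \<omega>))\<^sup>2 \<partial>M) = (\<Sum>i\<in>I. \<integral>\<omega>. (norm (X i \<omega>))\<^sup>2 \<partial>M)"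
proof -
  have pair: "integrable M (\<lambda>\<omega>. X i \<omega> \<bullet> X j \<omega>) \<and>
      (\<integral>\<omega>. X i \<omega> \<bullet> X j \<omega> \<partial>M) = (if i = j then \<integral>\<omega>. (norm (X i \<omega>))\<^sup>2 \<partial>M else 0)"
    if "i \<in> I" "j \<in> I" for i j
  proof (cases "i = j")
    case True
    then show ?thesis using sq_int[OF that(1)] by (simp add: power2_norm_eq_inner)
  next
    case False
    then show ?thesis
      using integral_inner_indep_eq_zero[OF indep_var_of_indep_vars[OF ind that False]]
        int mean that by simp
  qed
  have expand: "(norm (\<Sum>i\<in>I. X i \<omega>))\<^sup>2 = (\<Sum>i\<in>I. \<Sum>j\<in>I. X i \<omega> \<bullet> X j \<omega>)" for \<omega>
    by (simp add: power2_norm_eq_inner inner_sum_left inner_sum_right) (rule sum.swap)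
  have int_ij: "integrable M (\<lambda>\<omega>. X i \<omega> \<bullet> X j \<omega>)" if "i \<in> I" "j \<in> I" for i j
    using pair[OF that] by blast
  show "integrable M (\<lambda>\<omega>. (norm (\<Sum>i\<in>I. X i \<omega>))\<^sup>2)"
    unfolding expand by (auto intro!: Bochner_Integration.integrable_sum int_ij)
  have "(\<integral>\<omega>. (norm (\<Sum>i\<in>I. X i \<omega>))\<^sup>2 \<partial>M) = (\<Sum>i\<in>I. \<integral>\<omega>. (\<Sum>j\<in>I. X i \<omega> \<bullet> X j \<omega>) \<partial>M)"
    unfolding expand by (auto intro!: Bochner_Integration.integral_sum Bochner_Integration.integrable_sum int_ij)
  also have "\<dots> = (\<Sum>i\<in>I. \<Sum>j\<in>I. \<integral>\<omega>. X i \<omega> \<bullet> X j \<omega> \<partial>M)"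
    by (auto intro!: sum.cong Bochner_Integration.integral_sum int_ij)
  also have "\<dots> = (\<Sum>i\<in>I. \<integral>\<omega>. (norm (X i \<omega>))\<^sup>2 \<partial>M)"
  proof (rule sum.cong[OF refl])
    fix i assume "i \<in> I"
    then have "(\<Sum>j\<in>I. \<integral>\<omega>. X i \<omega> \<bullet> X j \<omega> \<partial>M) = (\<Sum>j\<in>I. if i = j then \<integral>\<omega>. (norm (X i \<omega>))\<^sup>2 \<partial>M else 0)"
      using pair by (intro sum.cong refl) blast
    also have "\<dots> = (\<integral>\<omega>. (norm (X i \<omega>))\<^sup>2 \<partial>M)"
      using I \<open>i \<in> I\<close> by (simp only: sum.delta' if_True)
    finally show "(\<Sum>j\<in>I. \<integral>\<omega>. X i \<omega> \<bullet> X j \<omega> \<partial>M) = (\<integral>\<omega>. (norm (X i \<omega>))\<^sup>2 \<partial>M)" .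
  qed
  finally show "(\<integral>\<omega>. (norm (\<Sum>i\<in>I. X i \<omega>))\<^sup>2 \<partial>M) = (\<Sum>i\<in>I. \<integral>\<omega>. (norm (X i \<omega>))\<^sup>2 \<partial>M)" .
qed

lemma integrable_integral_le_of_nn_integral_le:
  fixes f :: "'a \<Rightarrow> real"
  assumes [measurable]: "f \<in> borel_measurable M" and nonneg: "\<And>x. 0 \<le> f x"
    and le: "(\<integral>\<^sup>+x. ennreal (f x) \<partial>M) \<le> ennreal s" and "0 \<le> s"
  shows "integrable M f" and "(\<integral>x. f x \<partial>M) \<le> s"
proof -
  show int: "integrable M f"
    using le nonneg by (intro integrableI_bounded) (auto simp: top.not_eq_extremum le_less_trans)
  have "ennreal (\<integral>x. f x \<partial>M) = (\<integral>\<^sup>+x. ennreal (f x) \<partial>M)"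
    using nonneg by (intro nn_integral_eq_integral[OF int, symmetric]) auto
  with le have "ennreal (\<integral>x. f x \<partial>M) \<le> ennreal s" by simp
  with \<open>0 \<le> s\<close> show "(\<integral>x. f x \<partial>M) \<le> s" by simp
qed

lemma integrable_integral_compose_distr:
  fixes g :: "'b \<Rightarrow> 'c::{banach, second_countable_topology}"
  assumes W: "W \<in> measurable M D" "distr M D W = D" and g: "integrable D g"
  shows "integrable M (\<lambda>a. g (W a))" and "(\<integral>a. g (W a) \<partial>M) = (\<integral>\<omega>. g \<omega> \<partial>D)"
proof -
  have gm [measurable]: "g \<in> borel_measurable D" using g by (rule borel_measurable_integrable)
  show "integrable M (\<lambda>a. g (W a))" using g W integrable_distr_eq[OF W(1), of g] by simp
  show "(\<integral>a. g (W a) \<partial>M) = (\<integral>\<omega>. g \<omega> \<partial>D)" using W integral_distr[OF W(1) gm] by simp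
qed

lemma sample_mean_sq_error:
  fixes F :: "'w \<Rightarrow> 'b::euclidean_space" and W :: "nat \<Rightarrow> 'a \<Rightarrow> 'w"
  assumes M: "prob_space M" and D: "prob_space D" and K: "0 < K"
    and W: "\<forall>j<K. W j \<in> measurable M D \<and> distr M D (W j) = D"
    and ind: "prob_space.indep_vars M (\<lambda>_. D) W {..<K}"
    and F: "integrable D F" "(\<integral>\<omega>. F \<omega> \<partial>D) = m"
    and var: "(\<integral>\<^sup>+\<omega>. ennreal ((norm (F \<omega> - m))\<^sup>2) \<partial>D) \<le> ennreal s" and "0 \<le> s"
  shows "integrable M (\<lambda>a. (norm ((1 / real K) *\<^sub>R (\<Sum>j<K. F (W j a)) - m))\<^sup>2)"
    and "(\<integral>a. (norm ((1 / real K) *\<^sub>R (\<Sum>j<K. F (W j a)) - m))\<^sup>2 \<partial>M) \<le> s / real K"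
proof -
  interpret prob_space M by (rule M)
  interpret D: prob_space D by (rule D)
  have [measurable]: "F \<in> borel_measurable D" using F(1) by (rule borel_measurable_integrable)
  note F_var = integrable_integral_le_of_nn_integral_le[OF _ _ var \<open>0 \<le> s\<close>]
  define X where "X j a = F (W j a) - m" for j a
  have F_centered: "integrable D (\<lambda>\<omega>. F \<omega> - m)" "(\<integral>\<omega>. F \<omega> - m \<partial>D) = 0"
    using F by (auto simp: D.prob_space)
  have X: "integrable M (X j)" "(\<integral>a. X j a \<partial>M) = 0"
    "integrable M (\<lambda>a. (norm (X j a))\<^sup>2)" "(\<integral>a. (norm (X j a))\<^sup>2 \<partial>M) \<le> s"
    if "j \<in> {..<K}" for j
    using integrable_integral_compose_distr[of "W j" M D, OF _ _ F_centered(1)]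
      integrable_integral_compose_distr[of "W j" M D, OF _ _ F_var(1)] W F_centered(2) F_var(2) that
    unfolding X_def by auto
  have "indep_vars (\<lambda>_. borel) (\<lambda>j a. F (W j a) - m) {..<K}"
    by (rule indep_vars_compose2[OF ind]) measurable
  then have ind_X: "indep_vars (\<lambda>_. borel) X {..<K}" unfolding X_def .
  have mean_err: "(1 / real K) *\<^sub>R (\<Sum>j<K. F (W j a)) - m = (1 / real K) *\<^sub>R (\<Sum>j<K. X j a)" for a
    using K by (simp add: X_def sum_subtractf scaleR_diff_right sum_constant_scaleR)
  have sq: "(norm ((1 / real K) *\<^sub>R (\<Sum>j<K. F (W j a)) - m))\<^sup>2 = (1 / real K)\<^sup>2 * (norm (\<Sum>j<K. X j a))\<^sup>2" for a
    unfolding mean_err by (simp add: power_divide)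
  note sum_sq = integral_sq_norm_sum_indep[OF finite_lessThan ind_X X(1-3)]
  show "integrable M (\<lambda>a. (norm ((1 / real K) *\<^sub>R (\<Sum>j<K. F (W j a)) - m))\<^sup>2)"
    unfolding sq using sum_sq(1) by simp
  have "(\<integral>a. (norm ((1 / real K) *\<^sub>R (\<Sum>j<K. F (W j a)) - m))\<^sup>2 \<partial>M)
      = (1 / real K)\<^sup>2 * (\<Sum>j<K. \<integral>a. (norm (X j a))\<^sup>2 \<partial>M)"
    unfolding sq using sum_sq(2) by simp
  also have "\<dots> \<le> (1 / real K)\<^sup>2 * (\<Sum>j<K. s)"
    using X(4) by (intro mult_left_mono sum_mono) auto
  also have "\<dots> = s / real K" using K by (simp add: power2_eq_square)
  finally show "(\<integral>a. (norm ((1 / real K) *\<^sub>R (\<Sum>j<K. F (W j a)) - m))\<^sup>2 \<partial>M) \<le> s / real K" .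
qed

section \<open>Block coordinates and the gradient mapping\<close>

lemma subspace_blk_sub: "subspace (blk_sub blk i)"
  unfolding subspace_def blk_sub_def by auto

lemma blk_proj_mem: "blk_proj blk i v \<in> blk_sub blk i"
  unfolding blk_sub_def blk_proj_def by auto

lemma blk_proj_diff: "blk_proj blk i (v - w) = blk_proj blk i v - blk_proj blk i w"
  unfolding blk_proj_def by (simp add: vec_eq_iff)

lemma orthogonal_blk_sub:
  "v \<in> blk_sub blk i \<Longrightarrow> w \<in> blk_sub blk k \<Longrightarrow> i \<noteq> k \<Longrightarrow> orthogonal v w"
  unfolding orthogonal_def blk_sub_def inner_vec_def by (intro sum.neutral) auto

lemma norm_sum_blk_sub:
  assumes "finite I" "\<And>i. i \<in> I \<Longrightarrow> V i \<in> blk_sub blk i"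
  shows "(norm (\<Sum>i\<in>I. V i))\<^sup>2 = (\<Sum>i\<in>I. (norm (V i))\<^sup>2)"
proof (rule norm_sum_Pythagorean[OF assms(1)])
  show "pairwise (\<lambda>i j. orthogonal (V i) (V j)) I"
    using assms(2) by (auto simp: pairwise_def intro: orthogonal_blk_sub)
qed

lemma sum_blk_proj:
  assumes "\<forall>j. blk j < N"
  shows "(\<Sum>i<N. blk_proj blk i v) = v"
proof -
  have "(\<Sum>i<N. if blk j = i then v $ j else 0) = v $ j" for j
    using assms by simp
  then show ?thesis unfolding blk_proj_def by (simp add: vec_eq_iff sum_component)
qed

lemma sum_sq_norm_blk_proj:
  assumes "\<forall>j. blk j < N"
  shows "(\<Sum>i<N. (norm (blk_proj blk i v))\<^sup>2) = (norm v)\<^sup>2"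
  using norm_sum_blk_sub[of "{..<N}" "\<lambda>i. blk_proj blk i v" blk] sum_blk_proj[OF assms]
  by (simp add: blk_proj_mem)

lemma norm_grad_map_diff_le:
  fixes h :: "'y::euclidean_space \<Rightarrow> ereal"
  assumes blk: "\<forall>j. blk j < N" and g: "\<forall>i<N. closed_convex_on (blk_sub blk i) (g i)"
    and h: "closed_convex_on UNIV h" and \<eta>x: "0 < \<eta>x" and \<eta>y: "0 < \<eta>y"
  shows "norm (grad_map N blk g h \<eta>x \<eta>y x y sx sy - grad_map N blk g h \<eta>x \<eta>y x y sx' sy')
    \<le> norm (sx - sx', sy - sy')"
proof -
  define P where "P i s = prox_on (blk_sub blk i) (\<lambda>v. ereal \<eta>x * g i v)
      (blk_proj blk i x - \<eta>x *\<^sub>R blk_proj blk i s)" for i s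
  define Q where "Q s = prox_on UNIV (\<lambda>v. ereal \<eta>y * h v) (y + \<eta>y *\<^sub>R s)" for s
  define \<Delta> where "\<Delta> i = (1 / \<eta>x) *\<^sub>R (P i sx' - P i sx)" for i
  have g_cc: "closed_convex_on (blk_sub blk i) (\<lambda>v. ereal \<eta>x * g i v)" if "i < N" for i
    using closed_convex_on_cmult g \<eta>x that by blast
  have \<Delta>_mem: "\<Delta> i \<in> blk_sub blk i" if "i < N" for i
    unfolding \<Delta>_def P_def
    by (intro subspace_scale subspace_diff subspace_blk_sub prox_on_mem g_cc that)
  have \<Delta>_le: "norm (\<Delta> i) \<le> norm (blk_proj blk i (sx - sx'))" if "i < N" for i
  proof -
    have "norm (P i sx' - P i sx)
        \<le> norm ((blk_proj blk i x - \<eta>x *\<^sub>R blk_proj blk i sx') - (blk_proj blk i x - \<eta>x *\<^sub>R blk_proj blk i sx))"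
      unfolding P_def by (rule prox_on_nonexpansive[OF g_cc[OF that]])
    also have "\<dots> = \<eta>x * norm (blk_proj blk i (sx - sx'))"
      using \<eta>x by (simp add: blk_proj_diff scaleR_diff_right[symmetric])
    moreover have "norm (\<Delta> i) = norm (P i sx' - P i sx) / \<eta>x"
      unfolding \<Delta>_def norm_scaleR using \<eta>x by simp
    ultimately show ?thesis using \<eta>x by (simp add: pos_divide_le_eq mult.commute)
  qed
  have x_diff: "fst (grad_map N blk g h \<eta>x \<eta>y x y sx sy) - fst (grad_map N blk g h \<eta>x \<eta>y x y sx' sy')
      = (\<Sum>i<N. \<Delta> i)"
    unfolding grad_map_def \<Delta>_def P_def by (simp add: sum_subtractf[symmetric] algebra_simps)
  have "(norm (\<Sum>i<N. \<Delta> i))\<^sup>2 = (\<Sum>i<N. (norm (\<Delta> i))\<^sup>2)"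
    by (rule norm_sum_blk_sub) (use \<Delta>_mem in auto)
  also have "\<dots> \<le> (\<Sum>i<N. (norm (blk_proj blk i (sx - sx')))\<^sup>2)"
    using \<Delta>_le by (intro sum_mono power_mono) auto
  also have "\<dots> = (norm (sx - sx'))\<^sup>2" by (rule sum_sq_norm_blk_proj[OF blk])
  finally have x_part: "(norm (fst (grad_map N blk g h \<eta>x \<eta>y x y sx sy - grad_map N blk g h \<eta>x \<eta>y x y sx' sy')))\<^sup>2
      \<le> (norm (sx - sx'))\<^sup>2"
    unfolding fst_diff x_diff .
  have y_diff: "snd (grad_map N blk g h \<eta>x \<eta>y x y sx sy) - snd (grad_map N blk g h \<eta>x \<eta>y x y sx' sy')
      = (1 / \<eta>y) *\<^sub>R (Q sy - Q sy')"
    unfolding grad_map_def Q_def by (simp add: algebra_simps)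
  have "norm (Q sy - Q sy') \<le> norm ((y + \<eta>y *\<^sub>R sy) - (y + \<eta>y *\<^sub>R sy'))"
    unfolding Q_def by (rule prox_on_nonexpansive[OF closed_convex_on_cmult[OF h \<eta>y]])
  also have "\<dots> = \<eta>y * norm (sy - sy')"
    using \<eta>y by (simp add: scaleR_diff_right[symmetric])
  finally have y_part: "norm (snd (grad_map N blk g h \<eta>x \<eta>y x y sx sy - grad_map N blk g h \<eta>x \<eta>y x y sx' sy'))
      \<le> norm (sy - sy')"
    unfolding snd_diff y_diff norm_scaleR using \<eta>y by (simp add: pos_divide_le_eq mult.commute)
  have "(norm (grad_map N blk g h \<eta>x \<eta>y x y sx sy - grad_map N blk g h \<eta>x \<eta>y x y sx' sy'))\<^sup>2
      = (norm (fst (grad_map N blk g h \<eta>x \<eta>y x y sx sy - grad_map N blk g h \<eta>x \<eta>y x y sx' sy')))\<^sup>2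
        + (norm (snd (grad_map N blk g h \<eta>x \<eta>y x y sx sy - grad_map N blk g h \<eta>x \<eta>y x y sx' sy')))\<^sup>2"
    by (simp add: norm_prod_def)
  also have "\<dots> \<le> (norm (sx - sx'))\<^sup>2 + (norm (sy - sy'))\<^sup>2"
    using x_part y_part by (intro add_mono power_mono) auto
  also have "\<dots> = (norm (sx - sx', sy - sy'))\<^sup>2"
    by (simp add: norm_Pair)
  finally have "(norm (grad_map N blk g h \<eta>x \<eta>y x y sx sy - grad_map N blk g h \<eta>x \<eta>y x y sx' sy'))\<^sup>2
      \<le> (norm (sx - sx', sy - sy'))\<^sup>2" .
  then show ?thesis by (rule power2_le_imp_le) simp
qed

lemma blockwise_oracle_moments:
  fixes E :: "nat \<Rightarrow> 'w \<Rightarrow> real^'n"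
  assumes blk: "\<forall>j. blk j < N" and mem: "\<And>i \<omega>. i < N \<Longrightarrow> E i \<omega> \<in> blk_sub blk i"
    and int: "\<And>i. i < N \<Longrightarrow> integrable D (E i)"
    and mean: "\<And>i. i < N \<Longrightarrow> (\<integral>\<omega>. E i \<omega> \<partial>D) = blk_proj blk i m"
    and var: "\<And>i. i < N \<Longrightarrow>
      (\<integral>\<^sup>+\<omega>. ennreal ((norm (E i \<omega> - blk_proj blk i m))\<^sup>2) \<partial>D) \<le> ennreal (s / real N)"
    and "0 \<le> s"
  shows "integrable D (\<lambda>\<omega>. \<Sum>i<N. E i \<omega>)" and "(\<integral>\<omega>. (\<Sum>i<N. E i \<omega>) \<partial>D) = m"
    and "(\<integral>\<^sup>+\<omega>. ennreal ((norm ((\<Sum>i<N. E i \<omega>) - m))\<^sup>2) \<partial>D) \<le> ennreal s"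
proof -
  show "integrable D (\<lambda>\<omega>. \<Sum>i<N. E i \<omega>)" using int by auto
  show "(\<integral>\<omega>. (\<Sum>i<N. E i \<omega>) \<partial>D) = m"
    using int mean sum_blk_proj[OF blk] by simp
  \<comment> \<open>the block errors are orthogonal pointwise, so no independence between blocks is needed\<close>
  have sq: "(norm ((\<Sum>i<N. E i \<omega>) - m))\<^sup>2 = (\<Sum>i<N. (norm (E i \<omega> - blk_proj blk i m))\<^sup>2)" for \<omega>
  proof -
    have "(\<Sum>i<N. E i \<omega>) - m = (\<Sum>i<N. E i \<omega> - blk_proj blk i m)"
      using sum_blk_proj[OF blk, of m] by (simp add: sum_subtractf)
    moreover have "E i \<omega> - blk_proj blk i m \<in> blk_sub blk i" if "i < N" for i
      using mem[OF that] blk_proj_mem by (rule subspace_diff[OF subspace_blk_sub])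
    ultimately show ?thesis
      using norm_sum_blk_sub[of "{..<N}" "\<lambda>i. E i \<omega> - blk_proj blk i m" blk] by simp
  qed
  have [measurable]: "E i \<in> borel_measurable D" if "i < N" for i
    using int[OF that] by (rule borel_measurable_integrable)
  have "(\<integral>\<^sup>+\<omega>. ennreal ((norm ((\<Sum>i<N. E i \<omega>) - m))\<^sup>2) \<partial>D)
      = (\<integral>\<^sup>+\<omega>. (\<Sum>i<N. ennreal ((norm (E i \<omega> - blk_proj blk i m))\<^sup>2)) \<partial>D)"
    unfolding sq by (subst sum_ennreal) auto
  also have "\<dots> = (\<Sum>i<N. \<integral>\<^sup>+\<omega>. ennreal ((norm (E i \<omega> - blk_proj blk i m))\<^sup>2) \<partial>D)"
    by (rule nn_integral_sum) auto
  also have "\<dots> \<le> (\<Sum>i<N. ennreal (s / real N))"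
    using var by (intro sum_mono) auto
  also have "\<dots> = ennreal (\<Sum>i<N. s / real N)"
    using \<open>0 \<le> s\<close> by (intro sum_ennreal) simp
  also have "\<dots> \<le> ennreal s"
    using \<open>0 \<le> s\<close> by (cases "N = 0") simp_all
  finally show "(\<integral>\<^sup>+\<omega>. ennreal ((norm ((\<Sum>i<N. E i \<omega>) - m))\<^sup>2) \<partial>D) \<le> ennreal s" .
qed

lemma measure_gt_le_of_sq_le:
  assumes "prob_space M" and int: "integrable M Q" and sq: "\<And>a. a \<in> space M \<Longrightarrow> (V a)\<^sup>2 \<le> Q a"
    and "(\<integral>a. Q a \<partial>M) \<le> b" and c: "0 < c"
  shows "measure M {a \<in> space M. c < V a} \<le> b / c\<^sup>2"
proof -
  interpret prob_space M by fact
  have "measure M {a \<in> space M. c < V a} \<le> measure M {a \<in> space M. c\<^sup>2 \<le> Q a}"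
  \<comment> \<open>no measurability of V is assumed: a non-measurable event has measure 0\<close>
  proof (cases "{a \<in> space M. c < V a} \<in> events")
    case True
    have "{a \<in> space M. c < V a} \<subseteq> {a \<in> space M. c\<^sup>2 \<le> Q a}"
    proof clarify
      fix a assume "a \<in> space M" "c < V a"
      then have "c\<^sup>2 \<le> (V a)\<^sup>2" using c by (intro power_mono) auto
      with sq[OF \<open>a \<in> space M\<close>] show "c\<^sup>2 \<le> Q a" by linarith
    qed
    moreover have "{a \<in> space M. c\<^sup>2 \<le> Q a} \<in> events"
      using borel_measurable_integrable[OF int] by measurable
    ultimately show ?thesis using True by (intro finite_measure_mono)
  qed (simp add: measure_notin_sets)
  also have "\<dots> \<le> (\<integral>a. Q a \<partial>M) / c\<^sup>2"
    using sq c by (intro integral_Markov_inequality_measure[OF int sets.top])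
      (auto intro: order_trans[OF zero_le_power2])
  also have "\<dots> \<le> b / c\<^sup>2" using assms by (simp add: divide_right_mono)
  finally show ?thesis .
qed

lemma sample_size_le:
  fixes \<sigma> e k :: real
  assumes "0 < e" "1 \<le> k" and K: "K = nat \<lceil>k * (128 / e\<^sup>2) * \<sigma>\<^sup>2 + 1\<rceil>"
  shows "0 < K" and "\<sigma>\<^sup>2 / real K \<le> e\<^sup>2 / 128"
proof -
  have "128 * \<sigma>\<^sup>2 / e\<^sup>2 \<le> k * (128 / e\<^sup>2) * \<sigma>\<^sup>2"
    using mult_right_mono[OF \<open>1 \<le> k\<close>, of "128 / e\<^sup>2 * \<sigma>\<^sup>2"] by (simp add: mult.assoc)
  then have le: "128 * \<sigma>\<^sup>2 / e\<^sup>2 + 1 \<le> real K" unfolding K by linarith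
  moreover have "0 \<le> 128 * \<sigma>\<^sup>2 / e\<^sup>2" by simp
  ultimately show "0 < K" by linarith
  have "128 * \<sigma>\<^sup>2 / e\<^sup>2 \<le> real K" using le by linarith
  then have "128 * \<sigma>\<^sup>2 \<le> real K * e\<^sup>2" using \<open>0 < e\<close> by (simp add: pos_divide_le_eq)
  then show "\<sigma>\<^sup>2 / real K \<le> e\<^sup>2 / 128" using \<open>0 < K\<close> by (simp add: field_simps)
qed

lemma one_le_sample_size_factor:
  fixes \<mu> \<eta> :: real
  assumes "0 < \<mu>" "0 < \<eta>" "\<eta> < 1 / \<mu>"
  shows "1 \<le> 1 + 6 / (\<mu> * \<eta>) * ((2 - \<mu> * \<eta>) / (1 - \<mu> * \<eta>))"
  using assms by (simp add: field_simps)

lemma measure_grad_map_deviation_le: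
  fixes h :: "'y::euclidean_space \<Rightarrow> ereal"
  assumes blk: "\<forall>j. blk j < N" and g: "\<forall>i<N. closed_convex_on (blk_sub blk i) (g i)"
    and h: "closed_convex_on UNIV h" and "0 < \<eta>x" "0 < \<eta>y"
    and M: "prob_space M" and "0 < \<epsilon>" "0 < r"
    and err_x: "integrable M (\<lambda>a. (norm (sx a - gx))\<^sup>2)" "(\<integral>a. (norm (sx a - gx))\<^sup>2 \<partial>M) \<le> \<epsilon>\<^sup>2 / 128"
    and err_y: "integrable M (\<lambda>a. (norm (sy a - gy))\<^sup>2)" "(\<integral>a. (norm (sy a - gy))\<^sup>2 \<partial>M) \<le> \<epsilon>\<^sup>2 / 128"
  shows "measure M {a \<in> space M. norm (grad_map N blk g h \<eta>x \<eta>y x y (sx a) (sy a)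
      - grad_map N blk g h \<eta>x \<eta>y x y gx gy) > r * (\<epsilon> / 8)} \<le> 1 / r\<^sup>2"
proof -
  have sq_le: "(norm (grad_map N blk g h \<eta>x \<eta>y x y (sx a) (sy a) - grad_map N blk g h \<eta>x \<eta>y x y gx gy))\<^sup>2
      \<le> (norm (sx a - gx))\<^sup>2 + (norm (sy a - gy))\<^sup>2" for a
  proof -
    have "(norm (grad_map N blk g h \<eta>x \<eta>y x y (sx a) (sy a) - grad_map N blk g h \<eta>x \<eta>y x y gx gy))\<^sup>2
        \<le> (norm (sx a - gx, sy a - gy))\<^sup>2"
      using norm_grad_map_diff_le[OF assms(1-5)] by (rule power_mono) simp
    then show ?thesis by (simp add: norm_Pair)
  qed
  have "(\<integral>a. (norm (sx a - gx))\<^sup>2 + (norm (sy a - gy))\<^sup>2 \<partial>M) \<le> \<epsilon>\<^sup>2 / 64"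
    using err_x err_y by simp
  with sq_le have "measure M {a \<in> space M. r * (\<epsilon> / 8) <
      norm (grad_map N blk g h \<eta>x \<eta>y x y (sx a) (sy a) - grad_map N blk g h \<eta>x \<eta>y x y gx gy)}
      \<le> (\<epsilon>\<^sup>2 / 64) / (r * (\<epsilon> / 8))\<^sup>2"
    using \<open>0 < r\<close> \<open>0 < \<epsilon>\<close>
    by (intro measure_gt_le_of_sq_le[OF M Bochner_Integration.integrable_add[OF err_x(1) err_y(1)]]) simp_all
  also have "\<dots> = 1 / r\<^sup>2" using \<open>0 < r\<close> \<open>0 < \<epsilon>\<close> by (simp add: power_mult_distrib power_divide)
  finally show ?thesis by simp
qed

theorem lemma1:
  fixes N :: nat and blk :: "'n::finite \<Rightarrow> nat"
    and g :: "nat \<Rightarrow> real^'n \<Rightarrow> ereal" and h :: "'y::euclidean_space \<Rightarrow> ereal"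
    and f :: "real^'n \<Rightarrow> 'y \<Rightarrow> real"
    and L \<mu> \<sigma>x \<sigma>y \<eta>x \<eta>y \<epsilon> r :: real
    and Dx :: "'w measure" and Dz :: "'z measure"
    and ox :: "nat \<Rightarrow> real^'n \<Rightarrow> 'y \<Rightarrow> 'w \<Rightarrow> real^'n"
    and oy :: "real^'n \<Rightarrow> 'y \<Rightarrow> 'z \<Rightarrow> 'y"
    and M :: "'a measure" and W :: "nat \<Rightarrow> 'a \<Rightarrow> 'w" and Z :: "nat \<Rightarrow> 'a \<Rightarrow> 'z"
    and Mx My :: nat and domg :: "(real^'n) set" and domh :: "'y set"
    and x :: "real^'n" and y :: 'y
  defines "domg \<equiv> {v. \<forall>i<N. g i (blk_proj blk i v) < \<infinity>}"
    and "domh \<equiv> {w. h w < \<infinity>}"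
  assumes blk_range: "\<forall>j. blk j < N"
    and blk_nonempty: "\<forall>i<N. \<exists>j. blk j = i"
    \<comment> \<open>Assumption A\<close>
    and g_cc: "\<forall>i<N. closed_convex_on (blk_sub blk i) (g i)"
    and h_cc: "closed_convex_on UNIV h"
    and f_smooth: "\<exists>U. open U \<and> domg \<times> domh \<subseteq> U \<and>
        (\<forall>z\<in>U. (\<lambda>p. f (fst p) (snd p)) differentiable (at z)) \<and>
        L-lipschitz_on U (grad (\<lambda>p. f (fst p) (snd p)))"
    and f_sc: "\<forall>v\<in>domg. strongly_concave_on UNIV \<mu> (f v)"
    \<comment> \<open>Assumption B\<close>
    and Dx_prob: "prob_space Dx" and Dz_prob: "prob_space Dz"
    and ox_block: "\<forall>i<N. \<forall>v\<in>domg. \<forall>w\<in>domh. \<forall>\<omega>. ox i v w \<omega> \<in> blk_sub blk i"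
    and ox_unbiased: "\<forall>i<N. \<forall>v\<in>domg. \<forall>w\<in>domh. integrable Dx (ox i v w) \<and>
        (\<integral>\<omega>. ox i v w \<omega> \<partial>Dx) = blk_proj blk i (fst (grad (\<lambda>p. f (fst p) (snd p)) (v, w)))"
    and ox_var: "\<forall>i<N. \<forall>v\<in>domg. \<forall>w\<in>domh.
        (\<integral>\<^sup>+\<omega>. ennreal ((norm (ox i v w \<omega> - blk_proj blk i (fst (grad (\<lambda>p. f (fst p) (snd p)) (v, w)))))\<^sup>2) \<partial>Dx)
          \<le> ennreal (\<sigma>x\<^sup>2 / real N)"
    and oy_unbiased: "\<forall>v\<in>domg. \<forall>w\<in>domh. integrable Dz (oy v w) \<and>
        (\<integral>\<zeta>. oy v w \<zeta> \<partial>Dz) = snd (grad (\<lambda>p. f (fst p) (snd p)) (v, w))"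
    and oy_var: "\<forall>v\<in>domg. \<forall>w\<in>domh.
        (\<integral>\<^sup>+\<zeta>. ennreal ((norm (oy v w \<zeta> - snd (grad (\<lambda>p. f (fst p) (snd p)) (v, w))))\<^sup>2) \<partial>Dz)
          \<le> ennreal (\<sigma>y\<^sup>2)"
    \<comment> \<open>parameters\<close>
    and \<mu>_pos: "\<mu> > 0" and \<eta>x_pos: "\<eta>x > 0" and \<eta>y_pos: "\<eta>y > 0" and \<eta>y_lt: "\<eta>y < 1 / \<mu>"
    and \<epsilon>_pos: "\<epsilon> > 0"
    and Mx_def: "Mx = nat \<lceil>128 * \<sigma>x\<^sup>2 / \<epsilon>\<^sup>2 + 1\<rceil>"
    and My_def: "My = nat \<lceil>(1 + 6 / (\<mu> * \<eta>y) * ((2 - \<mu> * \<eta>y) / (1 - \<mu> * \<eta>y))) * (128 / \<epsilon>\<^sup>2) * \<sigma>y\<^sup>2 + 1\<rceil>"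
    \<comment> \<open>i.i.d. samples omega_1..omega_Mx ~ Dx and zeta_1..zeta_My ~ Dz on a probability space M\<close>
    and M_prob: "prob_space M"
    and W_meas: "\<forall>j<Mx. W j \<in> measurable M Dx \<and> distr M Dx (W j) = Dx"
    and W_indep: "prob_space.indep_vars M (\<lambda>_. Dx) W {..<Mx}"
    and Z_meas: "\<forall>j<My. Z j \<in> measurable M Dz \<and> distr M Dz (Z j) = Dz"
    and Z_indep: "prob_space.indep_vars M (\<lambda>_. Dz) Z {..<My}"
    \<comment> \<open>the point and the scalar\<close>
    and x_dom: "x \<in> domg" and y_dom: "y \<in> domh"
    and r_pos: "r > 0"
  shows "measure M {a \<in> space M.
      norm (grad_map N blk g h \<eta>x \<eta>y x y
              (\<Sum>i<N. (1 / real Mx) *\<^sub>R (\<Sum>j<Mx. ox i x y (W j a)))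
              ((1 / real My) *\<^sub>R (\<Sum>j<My. oy x y (Z j a)))
            - grad_map N blk g h \<eta>x \<eta>y x y
              (fst (grad (\<lambda>p. f (fst p) (snd p)) (x, y)))
              (snd (grad (\<lambda>p. f (fst p) (snd p)) (x, y))))
        > r * (\<epsilon> / 8)} \<le> 1 / r\<^sup>2"
proof -
  let ?F = "\<lambda>p. f (fst p) (snd p)"
  define Fx where "Fx \<omega> = (\<Sum>i<N. ox i x y \<omega>)" for \<omega>
  define sx where "sx a = (1 / real Mx) *\<^sub>R (\<Sum>j<Mx. Fx (W j a))" for a
  \<comment> \<open>all blocks use the same samples W j, so their sample means assemble into one of Fx\<close>
  have sx_eq: "(\<Sum>i<N. (1 / real Mx) *\<^sub>R (\<Sum>j<Mx. ox i x y (W j a))) = sx a" for a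
    unfolding sx_def Fx_def by (simp add: scaleR_sum_right sum.swap[of _ "{..<N}"])
  have Mx: "0 < Mx" "\<sigma>x\<^sup>2 / real Mx \<le> \<epsilon>\<^sup>2 / 128"
    using sample_size_le[of \<epsilon> 1 Mx \<sigma>x] \<epsilon>_pos Mx_def by simp_all
  \<comment> \<open>the paper's larger My is needed only later; here any factor \<ge> 1 would do\<close>
  note My = sample_size_le[OF \<epsilon>_pos one_le_sample_size_factor[OF \<mu>_pos \<eta>y_pos \<eta>y_lt] My_def]
  have ox_at: "\<And>i \<omega>. i < N \<Longrightarrow> ox i x y \<omega> \<in> blk_sub blk i"
    "\<And>i. i < N \<Longrightarrow> integrable Dx (ox i x y)"
    "\<And>i. i < N \<Longrightarrow> (\<integral>\<omega>. ox i x y \<omega> \<partial>Dx) = blk_proj blk i (fst (grad ?F (x, y)))"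
    "\<And>i. i < N \<Longrightarrow> (\<integral>\<^sup>+\<omega>. ennreal ((norm (ox i x y \<omega> - blk_proj blk i (fst (grad ?F (x, y)))))\<^sup>2) \<partial>Dx)
      \<le> ennreal (\<sigma>x\<^sup>2 / real N)"
    using ox_block ox_unbiased ox_var x_dom y_dom by auto
  have oy_at: "integrable Dz (oy x y)" "(\<integral>\<zeta>. oy x y \<zeta> \<partial>Dz) = snd (grad ?F (x, y))"
    "(\<integral>\<^sup>+\<zeta>. ennreal ((norm (oy x y \<zeta> - snd (grad ?F (x, y))))\<^sup>2) \<partial>Dz) \<le> ennreal (\<sigma>y\<^sup>2)"
    using oy_unbiased oy_var x_dom y_dom by auto
  note x_moments = blockwise_oracle_moments[OF blk_range ox_at zero_le_power2, folded Fx_def]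
  note err_x = sample_mean_sq_error[OF M_prob Dx_prob Mx(1) W_meas W_indep x_moments zero_le_power2,
      folded sx_def]
  note err_y = sample_mean_sq_error[OF M_prob Dz_prob My(1) Z_meas Z_indep oy_at zero_le_power2]
  show ?thesis unfolding sx_eq
    by (rule measure_grad_map_deviation_le[OF blk_range g_cc h_cc \<eta>x_pos \<eta>y_pos M_prob \<epsilon>_pos r_pos
        err_x(1) order_trans[OF err_x(2) Mx(2)] err_y(1) order_trans[OF err_y(2) My(2)]])
qed

end
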